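(* It holds that $$\mathrm{cl}\,\mathrm{conv}(P^B\setminus C)=\mathrm{cl}\,\mathrm{conv}\big(P^B\setminus T^{P^B\cap C}\big),$$ where $T^{P^B\cap C}=\{\bar x\}+\mathrm{conv}\big(\bigcup_{j\in N_1\cup N_2}\{\lambda\bar r^j:\alpha_j<\lambda<\beta_j\}\big)+\mathrm{recc}(P^B\cap C)$.
   Context: Let $A\in\mathbb{R}^{m\times n}$ have full row rank, $b\in\mathbb{R}^m$, and $P=\{x\in\mathbb{R}^n_+:Ax=b\}$. Let $C\subseteq\mathbb{R}^n$ be an open convex set. Fix a basis $B$ of $P$ with nonbasic set $N=\{1,\dots,n\}\setminus B$. Write $P=\{x:x_i=\bar b_i-\sum_{j\in N}\bar a_{ij}x_j\ (i\in B),\ x\ge0\}$ with $\bar b\ge0$. The basic solution $\bar x$ has $\bar x_i=\bar b_i$ ($i\in B$) and $0$ ($i\in N$). $P^B$ is obtained by dropping $x_i\ge0$ for $i\in B$. For $j\in N$, $\bar r^j$ has $\bar r^j_k=-\bar a_{kj}$ ($k\in B$), $\bar r^j_j=1$, and $0$ otherwise. Thus $P^B=\{\bar x+\sum_{j\in N}x_j\bar r^j:x_j\ge0\}$. It is assumed that $\bar x\notin\mathrm{cl}(C)$. For $j\in N$, $\alpha_j=\inf\{\lambda\ge0:\bar x+\lambda\bar r^j\in C\}$ and $\beta_j=\sup\{\lambda\ge0:\bar x+\lambda\bar r^j\in C\}$, with $\alpha_j=+\infty$, $\beta_j=-\infty$ if the halfline misses $C$. These values are unchanged if $C$ is replaced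 by $P^B\cap C$. Define - $N_1=\{j:\alpha_j\in(0,\infty),\beta_j=+\infty\}$; - $N_2=\{j:\alpha_j\in(0,\infty),\beta_j\in(\alpha_j,\infty)\}$. For a set $K$, $\mathrm{recc}(K)=\{d:x+\lambda d\in K\ \forall x\in K,\lambda\ge0\}$. Here $\mathrm{cl}\,\mathrm{conv}$ is the closure of the convex hull. *)

theory Defs
  imports "HOL-Analysis.Analysis"
begin

definition recc :: "'a::real_vector set \<Rightarrow> 'a set" where
  "recc K = {d. \<forall>x\<in>K. \<forall>t::real. t \<ge> 0 \<longrightarrow> x + t *\<^sub>R d \<in> K}"

text \<open>alpha: inf of the step lengths lambda >= 0 with xbar + lambda r in C (+infinity if none);
  beta: sup of them (-infinity if none).\<close>
definition alpha_step :: "'a::real_vector set \<Rightarrow> 'a \<Rightarrow> 'a \<Rightarrow> ereal" where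
  "alpha_step C xb r = Inf (ereal ` {t::real. t \<ge> 0 \<and> xb + t *\<^sub>R r \<in> C})"

definition beta_step :: "'a::real_vector set \<Rightarrow> 'a \<Rightarrow> 'a \<Rightarrow> ereal" where
  "beta_step C xb r = Sup (ereal ` {t::real. t \<ge> 0 \<and> xb + t *\<^sub>R r \<in> C})"

text \<open>P^B: the polyhedron P with the nonnegativity constraints of the basic variables dropped.\<close>
definition PB :: "real^'n^'m \<Rightarrow> real^'m \<Rightarrow> 'n set \<Rightarrow> (real^'n) set" where
  "PB A b B = {x. A *v x = b \<and> (\<forall>j. j \<notin> B \<longrightarrow> 0 \<le> x $ j)}"

end

theory Submission
  imports Defs
begin

text \<open>
  Dropping the basic sign constraints turns P into the translated cone
  P^B = xbar + cone{r^j : j in N}.  Since T is contained in C, only the inclusion of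
  P^B - T in Q = cl conv(P^B - C) needs an argument.  Separate a point x of P^B outside Q
  by a halfspace a z < c that contains no point of P^B - C.  Every ray with a r^j < 0
  then enters C for good, so beta_j = \<infinity> and alpha_j (-a r^j) \<le> a xbar - c.  Write
  x = xbar + \<Sum> lambda_j r^j and scale the coefficients of these descent rays by the
  theta \<le> 1 making the remainder d orthogonal to a.  The ray from x in direction d
  stays in P^B and below the hyperplane, hence in C, so d is a recession direction of
  P^B \<inter> C; and the scaled descent part is a convex combination of points sigma alpha_j r^j
  with sigma > 1, which lie on the open segments defining T.  Hence x lies in T.
\<close>

definition translated_cone :: "'a::real_vector \<Rightarrow> ('i \<Rightarrow> 'a) \<Rightarrow> 'i set \<Rightarrow> 'a set" where
  "translated_cone x0 r N = {x0 + (\<Sum>j\<in>N. l j *\<^sub>R r j) | l. \<forall>j\<in>N. 0 \<le> l j}"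

lemma translated_cone_add:
  assumes "p \<in> translated_cone x0 r N" and "\<forall>j\<in>N. 0 \<le> m j"
  shows "p + (\<Sum>j\<in>N. m j *\<^sub>R r j) \<in> translated_cone x0 r N"
proof -
  obtain l where p: "p = x0 + (\<Sum>j\<in>N. l j *\<^sub>R r j)" and l: "\<forall>j\<in>N. 0 \<le> l j"
    using assms(1) unfolding translated_cone_def by blast
  have "p + (\<Sum>j\<in>N. m j *\<^sub>R r j) = x0 + (\<Sum>j\<in>N. (l j + m j) *\<^sub>R r j)"
    by (simp add: p scaleR_add_left sum.distrib add.assoc)
  moreover have "\<forall>j\<in>N. 0 \<le> l j + m j"
    using l assms(2) by simp
  ultimately show ?thesis
    unfolding translated_cone_def by (intro CollectI exI[of _ "\<lambda>j. l j + m j"]) auto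
qed

lemma apex_in_translated_cone: "x0 \<in> translated_cone x0 r N"
  unfolding translated_cone_def by (rule CollectI, rule exI[of _ "\<lambda>_. 0"]) simp

lemma translated_cone_ray:
  assumes "finite N" and "j \<in> N" and "0 \<le> t"
  shows "x0 + t *\<^sub>R r j \<in> translated_cone x0 r N"
  using translated_cone_add[OF apex_in_translated_cone, of N "\<lambda>i. if i = j then t else 0" x0 r]
    assms by (simp add: if_distrib[of "\<lambda>c. c *\<^sub>R _"] cong: if_cong)

lemma recc_translated_cone:
  assumes "\<forall>j\<in>N. 0 \<le> m j"
  shows "(\<Sum>j\<in>N. m j *\<^sub>R r j) \<in> recc (translated_cone x0 r N)"
  unfolding recc_def
proof (intro CollectI ballI allI impI)
  fix p and t :: real
  assume "p \<in> translated_cone x0 r N" and "0 \<le> t"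
  then have "p + (\<Sum>j\<in>N. (t * m j) *\<^sub>R r j) \<in> translated_cone x0 r N"
    using assms by (intro translated_cone_add) auto
  then show "p + t *\<^sub>R (\<Sum>j\<in>N. m j *\<^sub>R r j) \<in> translated_cone x0 r N"
    by (simp add: scaleR_sum_right)
qed

lemma convex_translated_cone: "convex (translated_cone x0 r N)"
proof (rule convexI)
  fix p q and u v :: real
  assume "p \<in> translated_cone x0 r N" "q \<in> translated_cone x0 r N" "0 \<le> u" "0 \<le> v" "u + v = 1"
  then obtain l l' where p: "p = x0 + (\<Sum>j\<in>N. l j *\<^sub>R r j)" and l: "\<forall>j\<in>N. 0 \<le> l j"
    and q: "q = x0 + (\<Sum>j\<in>N. l' j *\<^sub>R r j)" and l': "\<forall>j\<in>N. 0 \<le> l' j"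
    and uv: "0 \<le> u" "0 \<le> v" "u + v = 1"
    unfolding translated_cone_def by blast
  have "u *\<^sub>R p + v *\<^sub>R q = (u + v) *\<^sub>R x0 + (\<Sum>j\<in>N. (u * l j + v * l' j) *\<^sub>R r j)"
    by (simp add: p q algebra_simps scaleR_sum_right sum.distrib)
  moreover have "\<forall>j\<in>N. 0 \<le> u * l j + v * l' j"
    using l l' uv by simp
  ultimately show "u *\<^sub>R p + v *\<^sub>R q \<in> translated_cone x0 r N"
    unfolding translated_cone_def using uv(3) by auto
qed

lemma reccD: "d \<in> recc K \<Longrightarrow> x \<in> K \<Longrightarrow> 0 \<le> t \<Longrightarrow> x + t *\<^sub>R d \<in> K"
  unfolding recc_def by blast

lemma recc_Int: "recc S \<inter> recc T \<subseteq> recc (S \<inter> T)"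
  unfolding recc_def by blast

lemma recc_open_convex:
  fixes C :: "'a::real_normed_vector set"
  assumes "open C" and "convex C" and "p \<in> C" and ray: "\<And>t. 0 \<le> t \<Longrightarrow> p + t *\<^sub>R d \<in> C"
  shows "d \<in> recc C"
  unfolding recc_def
proof (intro CollectI ballI allI impI)
  fix q and t :: real
  assume "q \<in> C" and "0 \<le> t"
  obtain e where "0 < e" and e: "ball q e \<subseteq> C"
    using \<open>open C\<close> \<open>q \<in> C\<close> open_contains_ball by blast
  define u where "u = e / (norm (q - p) + 1)"
  have n: "0 < norm (q - p) + 1"
    by (simp add: add_nonneg_pos)
  have "0 < u"
    using \<open>0 < e\<close> n by (simp add: u_def)
  have "u * norm (q - p) < e"
    using \<open>0 < e\<close> n by (simp add: u_def field_simps)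
  then have q': "q + u *\<^sub>R (q - p) \<in> C"
    using e \<open>0 < u\<close> by (auto simp: dist_norm)
  \<comment> \<open>q + t d is a convex combination of q + u (q - p), in C by openness, and a far
    point of the ray from p\<close>
  define \<theta> where "\<theta> = u / (1 + u)"
  have \<theta>: "0 < \<theta>" "\<theta> < 1" "(1 - \<theta>) * (1 + u) = 1" "(1 - \<theta>) * u = \<theta>"
    using \<open>0 < u\<close> by (auto simp: \<theta>_def field_simps)
  have "(1 - \<theta>) *\<^sub>R (q + u *\<^sub>R (q - p)) = ((1 - \<theta>) * (1 + u)) *\<^sub>R q - ((1 - \<theta>) * u) *\<^sub>R p"
    by (simp add: algebra_simps)
  also have "\<dots> = q - \<theta> *\<^sub>R p"
    by (simp only: \<theta>(3,4) scaleR_one)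
  moreover have "\<theta> *\<^sub>R (p + (t / \<theta>) *\<^sub>R d) = \<theta> *\<^sub>R p + t *\<^sub>R d"
    using \<theta>(1) by (simp add: scaleR_add_right)
  ultimately have "q + t *\<^sub>R d = (1 - \<theta>) *\<^sub>R (q + u *\<^sub>R (q - p)) + \<theta> *\<^sub>R (p + (t / \<theta>) *\<^sub>R d)"
    by simp
  also have "\<dots> \<in> C"
    using \<theta> \<open>0 \<le> t\<close> by (intro convexD[OF \<open>convex C\<close> q' ray]) auto
  finally show "q + t *\<^sub>R d \<in> C" .
qed

lemma alpha_step_le:
  assumes "0 \<le> t" and "x0 + t *\<^sub>R r \<in> C"
  shows "alpha_step C x0 r \<le> ereal t"
  unfolding alpha_step_def using assms by (intro Inf_lower) auto

lemma alpha_step_pos: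
  fixes C :: "'a::real_normed_vector set"
  assumes "x0 \<notin> closure C"
  shows "0 < alpha_step C x0 r"
proof (cases "r = 0")
  case True
  have "x0 \<notin> C"
    using assms closure_subset by blast
  with True show ?thesis
    by (simp add: alpha_step_def top_ereal_def)
next
  case False
  obtain e where "0 < e" and e: "\<And>y. y \<in> C \<Longrightarrow> e \<le> dist y x0"
    using assms unfolding closure_approachable by (meson not_le)
  have "ereal (e / norm r) \<le> ereal t" if "0 \<le> t" "x0 + t *\<^sub>R r \<in> C" for t
    using e[OF that(2)] that(1) False by (simp add: dist_norm divide_simps mult.commute)
  then have "ereal (e / norm r) \<le> alpha_step C x0 r"
    unfolding alpha_step_def by (auto intro: Inf_greatest)
  moreover have "0 < e / norm r"
    using \<open>0 < e\<close> False by simp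
  ultimately show ?thesis
    by (meson ereal_less(2) less_le_trans)
qed

lemma beta_step_eq_PInfty:
  assumes "\<And>t. t0 \<le> t \<Longrightarrow> x0 + t *\<^sub>R r \<in> C"
  shows "beta_step C x0 r = \<infinity>"
  unfolding beta_step_def
proof (rule SUP_PInfty)
  fix n :: nat
  show "\<exists>t\<in>{t. 0 \<le> t \<and> x0 + t *\<^sub>R r \<in> C}. ereal (real n) \<le> ereal t"
    using assms[of "max t0 (real n)"] by (intro bexI[of _ "max t0 (real n)"]) auto
qed

lemma between_alpha_beta_step:
  assumes "convex C" and "alpha_step C x0 r < ereal t" and "ereal t < beta_step C x0 r"
  shows "x0 + t *\<^sub>R r \<in> C"
proof -
  obtain s1 where s1: "x0 + s1 *\<^sub>R r \<in> C" "s1 < t"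
    using assms(2) unfolding alpha_step_def Inf_less_iff by auto
  obtain s2 where s2: "x0 + s2 *\<^sub>R r \<in> C" "t < s2"
    using assms(3) unfolding beta_step_def less_Sup_iff by auto
  define u where "u = (t - s1) / (s2 - s1)"
  have u: "0 \<le> u" "u \<le> 1" "u * (s2 - s1) = t - s1"
    using s1(2) s2(2) by (auto simp: u_def)
  have "x0 + t *\<^sub>R r = (1 - u) *\<^sub>R (x0 + s1 *\<^sub>R r) + u *\<^sub>R (x0 + s2 *\<^sub>R r)"
    using u(3) by (simp add: algebra_simps flip: scaleR_add_left)
  also have "\<dots> \<in> C"
    using u by (intro convexD[OF assms(1) s1(1) s2(1)]) auto
  finally show ?thesis .
qed

lemma alpha_beta_step_descent_ray:
  fixes C :: "'a::real_inner set"
  assumes "x0 \<notin> closure C" and "a \<bullet> r < 0"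
    and above: "\<And>t. 0 \<le> t \<Longrightarrow> x0 + t *\<^sub>R r \<notin> C \<Longrightarrow> c < a \<bullet> (x0 + t *\<^sub>R r)"
  shows "\<exists>\<alpha>>0. alpha_step C x0 r = ereal \<alpha> \<and> \<alpha> * - (a \<bullet> r) \<le> a \<bullet> x0 - c
           \<and> beta_step C x0 r = \<infinity>"
proof -
  define g where "g = - (a \<bullet> r)"
  have "0 < g"
    using assms(2) by (simp add: g_def)
  define t0 where "t0 = max 0 ((a \<bullet> x0 - c) / g)"
  have in_C: "x0 + t *\<^sub>R r \<in> C" if "t0 \<le> t" for t
  proof -
    have "a \<bullet> x0 - c \<le> t * g"
      using that \<open>0 < g\<close> by (simp add: t0_def pos_divide_le_eq)
    then show ?thesis
      using above[of t] that by (force simp: t0_def g_def inner_add_right)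
  qed
  have "alpha_step C x0 r \<le> ereal t0"
    using in_C by (intro alpha_step_le) (auto simp: t0_def)
  moreover have "0 < alpha_step C x0 r"
    using assms(1) by (rule alpha_step_pos)
  ultimately obtain \<alpha> where \<alpha>: "alpha_step C x0 r = ereal \<alpha>" "0 < \<alpha>" "\<alpha> \<le> t0"
    by (cases "alpha_step C x0 r") auto
  then have "\<alpha> \<le> (a \<bullet> x0 - c) / g"
    by (auto simp: t0_def max_def split: if_splits)
  then have "\<alpha> * g \<le> a \<bullet> x0 - c"
    using \<open>0 < g\<close> by (simp add: pos_le_divide_eq)
  moreover have "beta_step C x0 r = \<infinity>"
    using in_C by (rule beta_step_eq_PInfty)
  ultimately show ?thesis
    using \<alpha> by (auto simp: g_def)
qed

lemma sum_scaleR_in_convex_hull: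
  fixes w :: "'i \<Rightarrow> 'a::real_vector"
  assumes "finite J" and "\<And>j. j \<in> J \<Longrightarrow> 0 \<le> \<mu> j \<and> 0 < \<alpha> j"
    and "\<And>j s. j \<in> J \<Longrightarrow> \<alpha> j < s \<Longrightarrow> s *\<^sub>R w j \<in> U"
    and "1 < (\<Sum>j\<in>J. \<mu> j / \<alpha> j)"
  shows "(\<Sum>j\<in>J. \<mu> j *\<^sub>R w j) \<in> convex hull U"
proof -
  define \<sigma> where "\<sigma> = (\<Sum>j\<in>J. \<mu> j / \<alpha> j)"
  have "(\<Sum>j\<in>J. (\<mu> j / \<alpha> j / \<sigma>) *\<^sub>R ((\<alpha> j * \<sigma>) *\<^sub>R w j)) \<in> convex hull U"
  proof (rule convex_sum[OF assms(1) convex_convex_hull])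
    have "(\<Sum>j\<in>J. \<mu> j / \<alpha> j / \<sigma>) = \<sigma> / \<sigma>"
      unfolding \<sigma>_def by (rule sum_divide_distrib[symmetric])
    then show "(\<Sum>j\<in>J. \<mu> j / \<alpha> j / \<sigma>) = 1"
      using assms(4) by (simp add: \<sigma>_def)
    fix j assume "j \<in> J"
    then show "0 \<le> \<mu> j / \<alpha> j / \<sigma>"
      using assms(2,4) by (intro divide_nonneg_pos) (auto simp: \<sigma>_def)
    show "(\<alpha> j * \<sigma>) *\<^sub>R w j \<in> convex hull U"
      using \<open>j \<in> J\<close> assms(2,3,4) by (intro hull_inc) (simp add: \<sigma>_def)
  qed
  moreover have "(\<Sum>j\<in>J. (\<mu> j / \<alpha> j / \<sigma>) *\<^sub>R ((\<alpha> j * \<sigma>) *\<^sub>R w j)) = (\<Sum>j\<in>J. \<mu> j *\<^sub>R w j)"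
    using assms(2,4) by (intro sum.cong) (force simp: \<sigma>_def)+
  ultimately show ?thesis
    by simp
qed

lemma sum_eq_scaled_negative_part:
  fixes l g :: "'i \<Rightarrow> real"
  assumes "finite N" and "\<And>j. j \<in> N \<Longrightarrow> 0 \<le> l j" and "(\<Sum>j\<in>N. l j * g j) \<le> 0"
  shows "\<exists>\<theta>. 0 \<le> \<theta> \<and> \<theta> \<le> 1 \<and> (\<Sum>j\<in>N. l j * g j) = \<theta> * (\<Sum>j\<in>{j\<in>N. g j < 0}. l j * g j)"
proof -
  let ?s = "\<Sum>j\<in>N. l j * g j" and ?n = "\<Sum>j\<in>{j\<in>N. g j < 0}. l j * g j"
  have "?s = (\<Sum>j\<in>N - {j\<in>N. g j < 0}. l j * g j) + ?n"
    using assms(1) by (intro sum.subset_diff) auto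
  moreover have "0 \<le> (\<Sum>j\<in>N - {j\<in>N. g j < 0}. l j * g j)"
    using assms(2) by (intro sum_nonneg) auto
  ultimately have "?n \<le> ?s"
    by linarith
  show ?thesis
  proof (cases "?n = 0")
    case True
    then show ?thesis
      using \<open>?n \<le> ?s\<close> assms(3) by (intro exI[of _ 0]) simp
  next
    case False
    then have "?n < 0"
      using \<open>?n \<le> ?s\<close> assms(3) by linarith
    then show ?thesis
      using \<open>?n \<le> ?s\<close> assms(3)
      by (intro exI[of _ "?s / ?n"]) (simp add: divide_simps)
  qed
qed

text \<open>The index set of ray_segments is the paper's N_1 \<union> N_2, and T_region is the paper's
  T^{P^B \<inter> C} with P^B = translated_cone x0 r N.\<close>

definition ray_segments :: "'a::real_vector set \<Rightarrow> 'a \<Rightarrow> ('i \<Rightarrow> 'a) \<Rightarrow> 'i set \<Rightarrow> 'a set" where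
  "ray_segments C x0 r N =
     (\<Union>j\<in>{j\<in>N. 0 < alpha_step C x0 (r j) \<and> alpha_step C x0 (r j) < \<infinity> \<and>
                (beta_step C x0 (r j) = \<infinity> \<or>
                 (alpha_step C x0 (r j) < beta_step C x0 (r j) \<and> beta_step C x0 (r j) < \<infinity>))}.
        {t *\<^sub>R r j | t::real. alpha_step C x0 (r j) < ereal t \<and> ereal t < beta_step C x0 (r j)})"

definition T_region :: "'a::real_vector set \<Rightarrow> 'a \<Rightarrow> ('i \<Rightarrow> 'a) \<Rightarrow> 'i set \<Rightarrow> 'a set" where
  "T_region C x0 r N = {x0 + y + d | y d. y \<in> convex hull ray_segments C x0 r N
                                         \<and> d \<in> recc (translated_cone x0 r N \<inter> C)}"

lemma T_region_subset:
  fixes x0 :: "'a::real_vector" and r :: "'i \<Rightarrow> 'a"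
  assumes "finite N" and "convex C"
  defines "P \<equiv> translated_cone x0 r N"
  shows "T_region C x0 r N \<subseteq> P \<inter> C"
proof -
  have segments: "(\<lambda>y. x0 + y) ` ray_segments C x0 r N \<subseteq> P \<inter> C"
  proof (rule image_subsetI)
    fix z
    assume "z \<in> ray_segments C x0 r N"
    then obtain j t where "j \<in> N" and "0 < alpha_step C x0 (r j)" and z: "z = t *\<^sub>R r j"
      and t: "alpha_step C x0 (r j) < ereal t" "ereal t < beta_step C x0 (r j)"
      unfolding ray_segments_def by auto
    have "(0::ereal) < ereal t"
      using \<open>0 < alpha_step C x0 (r j)\<close> t(1) by (rule less_trans)
    then have "0 \<le> t"
      by simp
    have "x0 + z \<in> P"
      unfolding P_def z using assms(1) \<open>j \<in> N\<close> \<open>0 \<le> t\<close> by (rule translated_cone_ray)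
    moreover have "x0 + z \<in> C"
      unfolding z using assms(2) t by (rule between_alpha_beta_step)
    ultimately show "x0 + z \<in> P \<inter> C"
      by blast
  qed
  have "convex (P \<inter> C)"
    unfolding P_def by (intro convex_Int convex_translated_cone assms(2))
  with segments have hull: "(\<lambda>y. x0 + y) ` (convex hull ray_segments C x0 r N) \<subseteq> P \<inter> C"
    unfolding convex_hull_translation[symmetric] by (rule hull_minimal)
  show ?thesis
  proof
    fix z
    assume "z \<in> T_region C x0 r N"
    then obtain y d where z: "z = x0 + y + d" and "y \<in> convex hull ray_segments C x0 r N"
      and "d \<in> recc (P \<inter> C)"
      unfolding T_region_def P_def by blast
    then have "x0 + y + 1 *\<^sub>R d \<in> P \<inter> C"
      using hull by (intro reccD) auto
    then show "z \<in> P \<inter> C"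
      by (simp add: z)
  qed
qed

lemma negative_rays_in_convex_hull_ray_segments:
  fixes C :: "'a::real_inner set"
  assumes "finite N" and "x0 \<notin> closure C" and "c < a \<bullet> x0"
    and above: "\<And>j t. j \<in> N \<Longrightarrow> 0 \<le> t \<Longrightarrow> x0 + t *\<^sub>R r j \<notin> C \<Longrightarrow> c < a \<bullet> (x0 + t *\<^sub>R r j)"
    and "\<And>j. j \<in> N \<Longrightarrow> 0 \<le> \<mu> j"
    and "a \<bullet> x0 - c < (\<Sum>j\<in>{j\<in>N. a \<bullet> r j < 0}. \<mu> j * - (a \<bullet> r j))"
  shows "(\<Sum>j\<in>{j\<in>N. a \<bullet> r j < 0}. \<mu> j *\<^sub>R r j) \<in> convex hull ray_segments C x0 r N"
proof -
  let ?J = "{j\<in>N. a \<bullet> r j < 0}" and ?\<delta> = "a \<bullet> x0 - c"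
  have "\<forall>j\<in>?J. \<exists>\<alpha>>0. alpha_step C x0 (r j) = ereal \<alpha> \<and> \<alpha> * - (a \<bullet> r j) \<le> ?\<delta>
           \<and> beta_step C x0 (r j) = \<infinity>"
    using assms(2) above by (blast intro: alpha_beta_step_descent_ray)
  then obtain \<alpha> where \<alpha>: "\<And>j. j \<in> ?J \<Longrightarrow> 0 < \<alpha> j \<and> alpha_step C x0 (r j) = ereal (\<alpha> j)
           \<and> \<alpha> j * - (a \<bullet> r j) \<le> ?\<delta> \<and> beta_step C x0 (r j) = \<infinity>"
    by metis
  have "?\<delta> < (\<Sum>j\<in>?J. \<mu> j * - (a \<bullet> r j))"
    by fact
  also have "\<dots> \<le> (\<Sum>j\<in>?J. \<mu> j / \<alpha> j * ?\<delta>)"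
  proof (rule sum_mono)
    fix j assume "j \<in> ?J"
    then have "\<mu> j * (\<alpha> j * - (a \<bullet> r j)) \<le> \<mu> j * ?\<delta>"
      using \<alpha> assms(5) by (intro mult_left_mono) auto
    then show "\<mu> j * - (a \<bullet> r j) \<le> \<mu> j / \<alpha> j * ?\<delta>"
      using \<alpha>[OF \<open>j \<in> ?J\<close>] by (simp add: field_simps)
  qed
  also have "\<dots> = (\<Sum>j\<in>?J. \<mu> j / \<alpha> j) * ?\<delta>"
    by (simp add: sum_distrib_right)
  finally have "1 < (\<Sum>j\<in>?J. \<mu> j / \<alpha> j)"
    using assms(3) by simp
  moreover have "s *\<^sub>R r j \<in> ray_segments C x0 r N" if "j \<in> ?J" "\<alpha> j < s" for j s
    using \<alpha>[OF that(1)] that unfolding ray_segments_def by (intro UN_I[where a=j]) auto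
  ultimately show ?thesis
    using assms(1,5) \<alpha> by (intro sum_scaleR_in_convex_hull) auto
qed

lemma level_direction_in_recc_Int:
  fixes C :: "'a::real_inner set"
  assumes "open C" and "convex C" and "d \<in> recc P" and "x \<in> P" and "a \<bullet> x < c" and "a \<bullet> d = 0"
    and above: "\<And>p. p \<in> P \<Longrightarrow> p \<notin> C \<Longrightarrow> c < a \<bullet> p"
  shows "d \<in> recc (P \<inter> C)"
proof -
  have ray: "x + t *\<^sub>R d \<in> C" if "0 \<le> t" for t
  proof (rule ccontr)
    assume "x + t *\<^sub>R d \<notin> C"
    moreover have "x + t *\<^sub>R d \<in> P"
      using \<open>d \<in> recc P\<close> \<open>x \<in> P\<close> that by (rule reccD)
    ultimately have "c < a \<bullet> (x + t *\<^sub>R d)"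
      by (rule above[rotated])
    then show False
      using \<open>a \<bullet> x < c\<close> \<open>a \<bullet> d = 0\<close> by (simp add: inner_add_right)
  qed
  moreover from ray[of 0] have "x \<in> C"
    by simp
  ultimately have "d \<in> recc C"
    using assms(1,2) by (intro recc_open_convex[of C x]) auto
  then show ?thesis
    using \<open>d \<in> recc P\<close> recc_Int by blast
qed

lemma separated_point_in_T_region:
  fixes C :: "'a::real_inner set" and x0 :: 'a and r :: "'i \<Rightarrow> 'a"
  assumes "finite N" and "open C" and "convex C" and "x0 \<notin> closure C"
  defines "P \<equiv> translated_cone x0 r N"
  assumes "x \<in> P" and below: "a \<bullet> x < c" and above: "\<And>p. p \<in> P \<Longrightarrow> p \<notin> C \<Longrightarrow> c < a \<bullet> p"
  shows "x \<in> T_region C x0 r N"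
proof -
  obtain l where x: "x = x0 + (\<Sum>j\<in>N. l j *\<^sub>R r j)" and l: "\<And>j. j \<in> N \<Longrightarrow> 0 \<le> l j"
    using \<open>x \<in> P\<close> unfolding P_def translated_cone_def by blast
  define g where "g j = a \<bullet> r j" for j
  let ?J = "{j\<in>N. g j < 0}"
  have "x0 \<notin> C"
    using assms(4) closure_subset by blast
  then have "c < a \<bullet> x0"
    using above[of x0] unfolding P_def by (simp add: apex_in_translated_cone)
  have "a \<bullet> x = a \<bullet> x0 + (\<Sum>j\<in>N. l j * g j)"
    by (simp add: x g_def inner_add_right inner_sum_right)
  then have sum_less: "(\<Sum>j\<in>N. l j * g j) < c - a \<bullet> x0"
    using below by linarith
  then have sum_nonpos: "(\<Sum>j\<in>N. l j * g j) \<le> 0"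
    using \<open>c < a \<bullet> x0\<close> by linarith
  obtain \<theta> where \<theta>: "0 \<le> \<theta>" "\<theta> \<le> 1" and sum_eq: "(\<Sum>j\<in>N. l j * g j) = \<theta> * (\<Sum>j\<in>?J. l j * g j)"
    using sum_eq_scaled_negative_part[OF assms(1) l sum_nonpos] by blast
  \<comment> \<open>rescaling the descent coefficients by \<theta> leaves a remainder d orthogonal to a\<close>
  define \<mu> where "\<mu> j = (if g j < 0 then \<theta> * l j else 0)" for j
  define y where "y = (\<Sum>j\<in>?J. (\<theta> * l j) *\<^sub>R r j)"
  define d where "d = (\<Sum>j\<in>N. (l j - \<mu> j) *\<^sub>R r j)"
  have "(\<Sum>j\<in>N. \<mu> j *\<^sub>R r j) = y"
    unfolding y_def sum.inter_filter[OF assms(1)] by (intro sum.cong) (auto simp: \<mu>_def)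
  then have "x = x0 + y + d"
    by (simp add: x d_def scaleR_diff_left sum_subtractf)
  moreover have "y \<in> convex hull ray_segments C x0 r N"
    unfolding y_def g_def
  proof (rule negative_rays_in_convex_hull_ray_segments[OF assms(1,4) \<open>c < a \<bullet> x0\<close>])
    show "c < a \<bullet> (x0 + t *\<^sub>R r j)" if "j \<in> N" "0 \<le> t" "x0 + t *\<^sub>R r j \<notin> C" for j t
      using that assms(1) by (intro above) (auto simp: P_def intro: translated_cone_ray)
    show "0 \<le> \<theta> * l j" if "j \<in> N" for j
      using \<theta>(1) l[OF that] by simp
    have "(\<Sum>j\<in>?J. \<theta> * l j * - g j) = - (\<Sum>j\<in>N. l j * g j)"
      by (simp add: sum_eq sum_distrib_left sum_negf mult.assoc)
    then show "a \<bullet> x0 - c < (\<Sum>j\<in>{j\<in>N. a \<bullet> r j < 0}. \<theta> * l j * - (a \<bullet> r j))"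
      using sum_less by (simp add: g_def)
  qed
  moreover have "d \<in> recc (P \<inter> C)"
  proof (rule level_direction_in_recc_Int[OF assms(2,3) _ \<open>x \<in> P\<close> below _ above])
    show "d \<in> recc P"
      unfolding P_def d_def using \<theta> l
      by (intro recc_translated_cone) (auto simp: \<mu>_def mult_left_le_one_le)
    have "(\<Sum>j\<in>N. \<mu> j * g j) = \<theta> * (\<Sum>j\<in>?J. l j * g j)"
      unfolding sum.inter_filter[OF assms(1)] sum_distrib_left by (intro sum.cong) (auto simp: \<mu>_def)
    then show "a \<bullet> d = 0"
      using sum_eq by (simp add: d_def g_def inner_sum_right left_diff_distrib sum_subtractf)
  qed
  ultimately show ?thesis
    unfolding T_region_def P_def by blast
qed

theorem closure_convex_hull_translated_cone_diff:
  fixes C :: "'a::euclidean_space set" and x0 :: 'a and r :: "'i \<Rightarrow> 'a"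
  assumes "finite N" and "open C" and "convex C" and "x0 \<notin> closure C"
  defines "P \<equiv> translated_cone x0 r N"
  shows "closure (convex hull (P - C)) = closure (convex hull (P - T_region C x0 r N))"
proof
  have "T_region C x0 r N \<subseteq> C"
    using T_region_subset[OF assms(1,3)] by blast
  then show "closure (convex hull (P - C)) \<subseteq> closure (convex hull (P - T_region C x0 r N))"
    by (intro closure_mono hull_mono) blast
next
  define Q where "Q = closure (convex hull (P - C))"
  have "convex Q" and "closed Q"
    by (simp_all add: Q_def)
  have "P - T_region C x0 r N \<subseteq> Q"
  proof (rule subsetI, rule ccontr)
    fix x
    assume x: "x \<in> P - T_region C x0 r N" and "x \<notin> Q"
    then obtain a c where "a \<bullet> x < c" and separated: "\<forall>q\<in>Q. c < a \<bullet> q"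
      using separating_hyperplane_closed_point[OF \<open>convex Q\<close> \<open>closed Q\<close>] by blast
    have "c < a \<bullet> p" if "p \<in> P" and "p \<notin> C" for p
      using separated that hull_inc[of p "P - C"] closure_subset unfolding Q_def by blast
    then have "x \<in> T_region C x0 r N"
      using x \<open>a \<bullet> x < c\<close> unfolding P_def by (intro separated_point_in_T_region[OF assms(1-4)]) auto
    with x show False
      by blast
  qed
  then have "convex hull (P - T_region C x0 r N) \<subseteq> Q"
    using \<open>convex Q\<close> by (rule hull_minimal)
  then show "closure (convex hull (P - T_region C x0 r N)) \<subseteq> closure (convex hull (P - C))"
    using \<open>closed Q\<close> unfolding Q_def by (rule closure_minimal)
qed

lemma kernel_vector_supported_on_basis_eq_0:
  fixes A :: "real^'n^'m"
  assumes B_indep: "\<And>c. (\<Sum>j\<in>B. c j *\<^sub>R column j A) = 0 \<Longrightarrow> \<forall>j\<in>B. c j = 0"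
    and "A *v v = 0" and supp: "\<forall>k. k \<notin> B \<longrightarrow> v $ k = 0"
  shows "v = 0"
proof -
  have "(\<Sum>i\<in>B. v $ i *\<^sub>R column i A) = (\<Sum>i\<in>UNIV. v $ i *\<^sub>R column i A)"
    using supp by (intro sum.mono_neutral_left) auto
  also have "\<dots> = A *v v"
    by (simp add: matrix_mult_sum scalar_mult_eq_scaleR)
  finally have "\<forall>i\<in>B. v $ i = 0"
    using \<open>A *v v = 0\<close> by (intro B_indep) simp
  with supp show ?thesis
    by (simp add: vec_eq_iff) blast
qed

lemma PB_eq_translated_cone:
  fixes A :: "real^'n^'m" and r :: "'n \<Rightarrow> real^'n"
  assumes B_indep: "\<And>c. (\<Sum>j\<in>B. c j *\<^sub>R column j A) = 0 \<Longrightarrow> \<forall>j\<in>B. c j = 0"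
    and xbar_eq: "A *v xbar = b" and xbar_nonbasic: "\<forall>j. j \<notin> B \<longrightarrow> xbar $ j = 0"
    and r_ray: "\<forall>j. j \<notin> B \<longrightarrow> A *v r j = 0 \<and> r j $ j = 1
                   \<and> (\<forall>k. k \<notin> B \<and> k \<noteq> j \<longrightarrow> r j $ k = 0)"
  shows "PB A b B = translated_cone xbar r {j. j \<notin> B}"
proof -
  have A_rays: "A *v (\<Sum>j\<in>{j. j \<notin> B}. l j *\<^sub>R r j) = 0" for l
    using r_ray by (simp add: linear_sum[OF matrix_vector_mul_linear] o_def matrix_vector_mult_scaleR)
  have coord: "(\<Sum>j\<in>{j. j \<notin> B}. l j *\<^sub>R r j) $ k = l k" if "k \<notin> B" for l k
  proof -
    have "(\<Sum>j\<in>{j. j \<notin> B}. l j *\<^sub>R r j) $ k = (\<Sum>j\<in>{j. j \<notin> B}. if j = k then l j else 0)"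
      unfolding sum_component using r_ray that by (intro sum.cong) auto
    then show ?thesis
      using that by simp
  qed
  show ?thesis
  proof (intro set_eqI iffI)
    fix x
    assume "x \<in> PB A b B"
    define v where "v = x - xbar - (\<Sum>j\<in>{j. j \<notin> B}. (x $ j) *\<^sub>R r j)"
    have "A *v v = 0"
      using \<open>x \<in> PB A b B\<close> xbar_eq A_rays by (simp add: v_def PB_def matrix_vector_mult_diff_distrib)
    moreover have "\<forall>k. k \<notin> B \<longrightarrow> v $ k = 0"
      using xbar_nonbasic coord by (simp add: v_def)
    ultimately have "v = 0"
      using kernel_vector_supported_on_basis_eq_0[of A B v] B_indep by blast
    then show "x \<in> translated_cone xbar r {j. j \<notin> B}"
      using \<open>x \<in> PB A b B\<close> unfolding translated_cone_def PB_def v_def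
      by (intro CollectI exI[of _ "\<lambda>j. x $ j"]) (auto simp: algebra_simps)
  next
    fix x
    assume "x \<in> translated_cone xbar r {j. j \<notin> B}"
    then obtain l where x: "x = xbar + (\<Sum>j\<in>{j. j \<notin> B}. l j *\<^sub>R r j)" and "\<forall>j. j \<notin> B \<longrightarrow> 0 \<le> l j"
      unfolding translated_cone_def by auto
    then show "x \<in> PB A b B"
      using xbar_eq xbar_nonbasic A_rays coord by (simp add: PB_def matrix_vector_right_distrib)
  qed
qed

theorem corollary1:
  fixes A :: "real^'n^'m" and b :: "real^'m" and C :: "(real^'n) set"
    and B :: "'n set" and xbar :: "real^'n" and r :: "'n \<Rightarrow> real^'n"
  assumes full_row_rank: "rank A = CARD('m)"
    and C_open: "open C" and C_convex: "convex C"
    and B_card: "card B = CARD('m)"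
    and B_indep: "\<And>c. (\<Sum>j\<in>B. c j *\<^sub>R column j A) = 0 \<Longrightarrow> \<forall>j\<in>B. c j = 0"
    and xbar_eq: "A *v xbar = b" and xbar_nonbasic: "\<forall>j. j \<notin> B \<longrightarrow> xbar $ j = 0"
    and xbar_feasible: "\<forall>i. 0 \<le> xbar $ i"
    and r_ray: "\<forall>j. j \<notin> B \<longrightarrow> A *v r j = 0 \<and> r j $ j = 1
                   \<and> (\<forall>k. k \<notin> B \<and> k \<noteq> j \<longrightarrow> r j $ k = 0)"
    and xbar_not_cl: "xbar \<notin> closure C"
  shows "closure (convex hull (PB A b B - C)) =
         closure (convex hull (PB A b B -
           {xbar + y + d | y d.
              y \<in> convex hull (\<Union>j\<in>{j. j \<notin> B \<and>
                      0 < alpha_step C xbar (r j) \<and> alpha_step C xbar (r j) < \<infinity> \<and>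
                      (beta_step C xbar (r j) = \<infinity> \<or>
                       (alpha_step C xbar (r j) < beta_step C xbar (r j) \<and>
                        beta_step C xbar (r j) < \<infinity>))}.
                    {t *\<^sub>R r j | t::real. alpha_step C xbar (r j) < ereal t \<and>
                                        ereal t < beta_step C xbar (r j)})
            \<and> d \<in> recc (PB A b B \<inter> C)}))"
proof -
  have "PB A b B = translated_cone xbar r {j. j \<notin> B}"
    using B_indep xbar_eq xbar_nonbasic r_ray by (rule PB_eq_translated_cone)
  then show ?thesis
    using closure_convex_hull_translated_cone_diff[OF _ C_open C_convex xbar_not_cl, of "{j. j \<notin> B}" r]
    by (simp add: T_region_def ray_segments_def)
qed

end
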